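(* Let $f(z)=e^z$ and let $U\subset\mathbb{C}$ be open and nonempty. Then $U$ contains a repelling periodic point of $f$.
   Context: A point $p$ is periodic if $f^n(p)=p$ for some $n\geq1$ ($f^n$ the $n$-th iterate); it is repelling if moreover $|(f^n)'(p)|>1$. *)

theory Defs
  imports "HOL-Analysis.Analysis"
begin

definition repelling_periodic_point :: "(complex \<Rightarrow> complex) \<Rightarrow> complex \<Rightarrow> bool" where
  "repelling_periodic_point f p \<longleftrightarrow>
     (\<exists>n::nat. n \<ge> 1 \<and> (f ^^ n) p = p \<and> cmod (deriv (f ^^ n) p) > 1)"

end

theory Submission
  imports Defs "HOL-Complex_Analysis.Complex_Analysis"
begin

(* 1. Every disc contains a point whose exp-orbit meets the real axis.  Otherwise
      each iterate maps the disc B(c,r) into a half-plane, and the Schwarz-Pick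
      bound |(exp^n)'(c)| <= 2 |Im exp^n(c)| / r holds for all n.  Comparing this with
      the elementary dynamics of the imaginary parts of the orbit of c (they shrink
      by a factor 13/15 whenever they are >= 1 and double once the orbit lives in a
      thin strip far to the right) gives a contradiction.
   2. Shadowing: a closed pseudo-orbit c_0, ..., c_n = c_0 whose jumps are small
      compared with |exp c_i| and whose multiplier prod |exp c_i| / 2 exceeds 1 is
      followed by a true repelling periodic orbit.  The point is found by the Banach
      fixed point theorem for a composition of local branches of the logarithm.
   3. For a point c whose orbit reaches the real axis, the orbit tends to +infinity
      along it; follow it until it is large, then jump back to c through a preimage
      b of c of large modulus.  Radii are chosen to make this a closed pseudo-orbit
      as in step 2, which yields the repelling periodic point near c. *)

section \<open>Iterates of the exponential and their derivatives\<close>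

lemma iterate_exp_has_derivative:
  "((exp ^^ n) has_field_derivative (\<Prod>i<n. exp ((exp ^^ i) z))) (at z)"
proof (induction n)
  case 0
  then show ?case by (simp add: id_def)
next
  case (Suc n)
  have "((\<lambda>x. exp ((exp ^^ n) x)) has_field_derivative
          exp ((exp ^^ n) z) * (\<Prod>i<n. exp ((exp ^^ i) z))) (at z)"
    by (rule DERIV_chain2[OF DERIV_exp Suc])
  then show ?case by (simp add: mult.commute)
qed

lemma iterate_exp_holomorphic: "(exp ^^ n) holomorphic_on S"
  using iterate_exp_has_derivative
  by (meson field_differentiable_def field_differentiable_at_within holomorphic_on_def)

lemma repelling_of_large_multiplier:
  assumes "1 \<le> n" and "(exp ^^ n) p = p" and "1 < (\<Prod>i<n. cmod (exp ((exp ^^ i) p)))"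
  shows "repelling_periodic_point exp p"
proof -
  have "deriv (exp ^^ n) p = (\<Prod>i<n. exp ((exp ^^ i) p))"
    by (rule DERIV_imp_deriv[OF iterate_exp_has_derivative])
  then have "cmod (deriv (exp ^^ n) p) = (\<Prod>i<n. cmod (exp ((exp ^^ i) p)))"
    by (simp only: prod_norm)
  with assms show ?thesis by (auto simp: repelling_periodic_point_def)
qed

section \<open>Every disc contains a point whose orbit meets the real axis\<close>

text \<open>The Cayley transform w \<mapsto> (w - w0) / (w - cnj w0) maps the upper half-plane into
  the unit disc: a point of the upper half-plane is closer to w0 than to cnj w0.\<close>
lemma cayley_upper_half_plane:
  assumes "0 < Im w" and "0 < Im w0"
  shows "norm ((w - w0) / (w - cnj w0)) < 1"
proof -
  have "(cmod (w - w0))^2 < (cmod (w - cnj w0))^2"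
    using assms unfolding cmod_power2 by (simp add: power2_eq_square algebra_simps)
  then have "cmod (w - w0) < cmod (w - cnj w0)"
    by (meson norm_ge_zero power_less_imp_less_base)
  moreover have "w - cnj w0 \<noteq> 0" using assms by (auto simp: complex_eq_iff)
  ultimately show ?thesis by (simp add: norm_divide divide_less_eq)
qed

text \<open>A holomorphic map from a disc of radius r into the upper half-plane has derivative
  at the centre at most 2 Im f(c) / r: compose with the Cayley map sending f(c) to 0
  and apply the Schwarz lemma.\<close>
lemma deriv_bound_upper_half_plane:
  fixes f :: "complex \<Rightarrow> complex"
  assumes holf: "f holomorphic_on ball c r" and r: "r > 0"
    and pos: "\<And>z. z \<in> ball c r \<Longrightarrow> Im (f z) > 0"
  shows "norm (deriv f c) \<le> 2 * Im (f c) / r"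
proof -
  define w0 where "w0 = f c"
  have w0: "Im w0 > 0" using pos r by (simp add: w0_def)
  define g where "g \<zeta> = f (c + of_real r * \<zeta>)" for \<zeta>
  define h where "h \<zeta> = (g \<zeta> - w0) / (g \<zeta> - cnj w0)" for \<zeta>
  have inball: "c + of_real r * \<zeta> \<in> ball c r" if "norm \<zeta> < 1" for \<zeta>
    using that r by (simp add: dist_norm norm_mult)
  have Im_g: "Im (g \<zeta>) > 0" if "norm \<zeta> < 1" for \<zeta>
    using pos[OF inball[OF that]] by (simp add: g_def)
  have den: "g \<zeta> - cnj w0 \<noteq> 0" if "norm \<zeta> < 1" for \<zeta>
    using Im_g[OF that] w0 by (auto simp: complex_eq_iff)
  have holg: "g holomorphic_on ball 0 1"
    unfolding g_def
    by (rule holomorphic_on_compose_gen[OF _ holf, unfolded o_def])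
       (use inball in \<open>auto intro!: holomorphic_intros simp: mem_ball\<close>)
  have holh: "h holomorphic_on ball 0 1"
    unfolding h_def using den by (auto intro!: holomorphic_intros holg)
  have h0: "h 0 = 0" by (simp add: h_def g_def w0_def)
  have h_disc: "norm (h \<zeta>) < 1" if "norm \<zeta> < 1" for \<zeta>
    unfolding h_def by (rule cayley_upper_half_plane[OF Im_g[OF that] w0])
  have Schwarz: "norm (deriv h 0) \<le> 1"
    using Schwarz_Lemma(2)[OF holh h0 h_disc, of 0] by simp
  have "(f has_field_derivative deriv f c) (at c)"
    using holf r by (meson centre_in_ball holomorphic_derivI open_ball)
  then have dg: "(g has_field_derivative deriv f c * of_real r) (at 0)"
  proof -
    have "((\<lambda>\<zeta>. c + of_real r * \<zeta>) has_field_derivative of_real r) (at 0)"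
      by (auto intro!: derivative_eq_intros)
    from DERIV_chain2[of f, OF _ this] \<open>(f has_field_derivative deriv f c) (at c)\<close>
    show ?thesis by (simp add: g_def[abs_def])
  qed
  have g0: "g 0 = w0" by (simp add: g_def w0_def)
  have den0: "w0 - cnj w0 \<noteq> 0" using den[of 0] g0 by simp
  have "(h has_field_derivative deriv f c * of_real r / (w0 - cnj w0)) (at 0)"
    unfolding h_def
    by (rule DERIV_cong[OF DERIV_divide[OF DERIV_diff[OF dg DERIV_const] DERIV_diff[OF dg DERIV_const]]])
       (use den0 g0 in simp_all)
  then have "deriv h 0 = deriv f c * of_real r / (w0 - cnj w0)"
    by (rule DERIV_imp_deriv)
  moreover have "cmod (w0 - cnj w0) = 2 * Im w0"
    using w0 by (simp add: complex_diff_cnj norm_mult)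
  ultimately have "norm (deriv f c) * r / (2 * Im w0) \<le> 1"
    using Schwarz r by (simp add: norm_divide norm_mult)
  then show ?thesis using w0 r by (simp add: w0_def field_simps)
qed

lemma connected_off_real_axis_same_side:
  assumes "connected S" and "\<And>z. z \<in> S \<Longrightarrow> Im z \<noteq> 0" and "a \<in> S" "b \<in> S"
  shows "Im a * Im b > 0"
proof (rule ccontr)
  assume "\<not> ?thesis"
  then have "Im a \<le> 0 \<and> 0 \<le> Im b \<or> Im b \<le> 0 \<and> 0 \<le> Im a"
    by (auto simp: zero_less_mult_iff not_less)
  then have "\<exists>z\<in>S. inner \<i> z = 0"
    using connected_ivt_hyperplane[OF assms(1) assms(3,4), of \<i> 0]
          connected_ivt_hyperplane[OF assms(1) assms(4,3), of \<i> 0]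
    by auto
  then show False using assms(2) by auto
qed

text \<open>If no point of the disc B(c,r) has its n-th iterate on the real axis, the n-th
  iterate maps the disc into a half-plane, so by Schwarz-Pick the multiplier of the
  orbit segment of c is controlled by the imaginary part of its endpoint.\<close>
lemma iterate_derivative_bound_off_real:
  assumes r: "r > 0" and off: "\<And>w. w \<in> ball c r \<Longrightarrow> Im ((exp ^^ n) w) \<noteq> 0"
  shows "(\<Prod>i<n. cmod (exp ((exp ^^ i) c))) \<le> 2 * \<bar>Im ((exp ^^ n) c)\<bar> / r"
proof -
  let ?F = "exp ^^ n"
  have c: "c \<in> ball c r" using r by simp
  have side: "Im (?F w) * Im (?F c) > 0" if "w \<in> ball c r" for w
  proof (rule connected_off_real_axis_same_side)
    show "connected (?F ` ball c r)"
      by (intro connected_continuous_image holomorphic_on_imp_continuous_on iterate_exp_holomorphic)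
         simp
  qed (use off that c in auto)
  define \<sigma> where "\<sigma> = (if Im (?F c) > 0 then 1 else -1 :: complex)"
  define f where "f w = \<sigma> * ?F w" for w
  have "f holomorphic_on ball c r" unfolding f_def by (intro holomorphic_intros iterate_exp_holomorphic)
  moreover have "Im (f w) > 0" if "w \<in> ball c r" for w
    using side[OF that] by (auto simp: f_def \<sigma>_def zero_less_mult_iff)
  ultimately have "norm (deriv f c) \<le> 2 * Im (f c) / r"
    using deriv_bound_upper_half_plane r by blast
  moreover have "Im (f c) = \<bar>Im (?F c)\<bar>" by (simp add: f_def \<sigma>_def)
  moreover have "norm (deriv f c) = (\<Prod>i<n. cmod (exp ((exp ^^ i) c)))"
  proof -
    have "deriv f c = \<sigma> * (\<Prod>i<n. exp ((exp ^^ i) c))"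
      unfolding f_def by (rule DERIV_imp_deriv[OF DERIV_cmult[OF iterate_exp_has_derivative]])
    moreover have "norm \<sigma> = 1" by (simp add: \<sigma>_def)
    ultimately show ?thesis by (simp only: norm_mult prod_norm mult_1)
  qed
  ultimately show ?thesis by simp
qed

lemma sin_taylor5_bound: "\<bar>sin (x::real) - (x - x^3/6)\<bar> \<le> \<bar>x\<bar>^5/120"
proof -
  have "{..<5::nat} = {0,1,2,3,4}" by auto
  then have sum: "(\<Sum>m<5. sin_coeff m * x ^ m) = x - x^3/6" by (simp add: sin_coeff_def fact_numeral)
  have "fact 5 = (120::real)" by (simp add: eval_nat_numeral)
  then have rem: "inverse (fact 5) * \<bar>x\<bar> ^ 5 = \<bar>x\<bar>^5/(120::real)" by simp
  show ?thesis using Maclaurin_sin_bound[of x 5] unfolding sum rem .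
qed

lemma sin_taylor3_bound: "\<bar>sin (x::real) - x\<bar> \<le> \<bar>x\<bar>^3/6"
proof -
  have "{..<3::nat} = {0,1,2}" by auto
  then have sum: "(\<Sum>m<3. sin_coeff m * x ^ m) = x" by (simp add: sin_coeff_def)
  have "fact 3 = (6::real)" by (simp add: eval_nat_numeral)
  then have rem: "inverse (fact 3) * \<bar>x\<bar> ^ 3 = \<bar>x\<bar>^3/(6::real)" by simp
  show ?thesis using Maclaurin_sin_bound[of x 3] unfolding sum rem .
qed

lemma abs_sin_le_large: assumes "1 \<le> \<bar>y\<bar>" shows "\<bar>sin (y::real)\<bar> \<le> 13/15 * \<bar>y\<bar>"
proof (cases "2 \<le> \<bar>y\<bar>")
  case True
  then show ?thesis using abs_sin_le_one[of y] by linarith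
next
  case False
  define a where "a = \<bar>y\<bar>"
  have a: "1 \<le> a" "a \<le> 2" using assms False by (auto simp: a_def)
  have a2: "a^2 \<le> 4" using power_mono[of a 2 2] a by simp
  have a21: "1 \<le> a^2" using a by simp
  have nonneg: "0 \<le> 1 - a^2/6" using a2 by linarith
  have "y - y^3/6 = y * (1 - a^2/6)"
    by (simp add: a_def power2_eq_square power3_eq_cube algebra_simps)
  then have "\<bar>y - y^3/6\<bar> = a * \<bar>1 - a^2/6\<bar>" by (simp only: abs_mult a_def)
  also have "\<dots> = a * (1 - a^2/6)" using nonneg by simp
  finally have "\<bar>y - y^3/6\<bar> = a * (1 - a^2/6)" .
  moreover have "\<bar>y\<bar>^5 = a * (a^2*a^2)" by (simp add: a_def power2_eq_square numeral_eq_Suc)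
  ultimately have "\<bar>sin y\<bar> \<le> a * (1 - a^2/6) + a * (a^2*a^2)/120"
    using sin_taylor5_bound[of y] by linarith
  also have "\<dots> = a * (1 - a^2/6 + (a^2*a^2)/120)" by (simp add: distrib_left)
  also have "\<dots> \<le> a * (13/15)"
  proof (rule mult_left_mono)
    have "a^2 * a^2 \<le> 4 * a^2" using a2 by (rule mult_right_mono) simp
    then show "1 - a^2/6 + (a^2*a^2)/120 \<le> 13/15" using a21 by linarith
  qed (use a in simp)
  finally show ?thesis by (simp add: a_def)
qed

lemma abs_sin_ge_small: assumes "\<bar>y::real\<bar> < 1" shows "\<bar>y\<bar>/2 \<le> \<bar>sin y\<bar>"
proof -
  have "\<bar>y\<bar>^3 \<le> \<bar>y\<bar>^1" using assms by (intro power_decreasing) auto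
  then have "\<bar>y\<bar>^3 \<le> \<bar>y\<bar>" by simp
  moreover have "\<bar>y\<bar> \<le> \<bar>sin y\<bar> + \<bar>sin y - y\<bar>" by linarith
  ultimately show ?thesis using sin_taylor3_bound[of y] by linarith
qed

lemma cos_ge_small: assumes "\<bar>y::real\<bar> < 1" shows "1/2 \<le> cos y"
proof -
  have "\<bar>sin (y/2)\<bar> \<le> 1/2" using abs_sin_x_le_abs_x[of "y/2"] assms by simp
  then have "(sin (y/2))^2 \<le> (1/2)^2" by (metis abs_ge_zero power2_abs power_mono)
  then show ?thesis using cos_double_sin[of "y/2"] by (simp add: power2_eq_square)
qed

text \<open>Contraction factor of the imaginary part under one application of exp,
  relative to the modulus of the image: 13/15 for points at least 1 away from the
  real axis, 1 otherwise.\<close>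
definition imag_contraction :: "real \<Rightarrow> real" where
  "imag_contraction y = (if 1 \<le> \<bar>y\<bar> then 13/15 else 1)"

lemma imag_contraction_pos: "0 < imag_contraction y" and imag_contraction_le_1: "imag_contraction y \<le> 1"
  by (simp_all add: imag_contraction_def)

lemma abs_Im_exp_le: "\<bar>Im (exp z)\<bar> \<le> cmod (exp z) * imag_contraction (Im z) * \<bar>Im z\<bar>"
proof -
  have "\<bar>sin (Im z)\<bar> \<le> imag_contraction (Im z) * \<bar>Im z\<bar>"
    using abs_sin_le_large[of "Im z"] abs_sin_x_le_abs_x[of "Im z"] by (simp add: imag_contraction_def)
  then have "exp (Re z) * \<bar>sin (Im z)\<bar> \<le> exp (Re z) * (imag_contraction (Im z) * \<bar>Im z\<bar>)"
    by (intro mult_left_mono) auto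
  then show ?thesis by (simp add: Im_exp abs_mult mult.assoc)
qed

lemma Re_exp_grows_in_strip:
  assumes "\<bar>Im z\<bar> < 1" shows "Re z + (1 - ln 2) \<le> Re (exp z)"
proof -
  have "1 + (Re z - ln 2) \<le> exp (Re z - ln 2)" by (rule exp_ge_add_one_self)
  moreover have "exp (Re z - ln 2) = exp (Re z) / 2" by (simp add: exp_diff)
  moreover have "exp (Re z) * (1/2) \<le> exp (Re z) * cos (Im z)"
    using cos_ge_small[OF assms] by (intro mult_left_mono) auto
  moreover have "Re (exp z) = exp (Re z) * cos (Im z)" by (rule Re_exp)
  ultimately show ?thesis by linarith
qed

lemma abs_Im_exp_doubles:
  assumes "\<bar>Im z\<bar> < 1" and "ln 4 \<le> Re z" shows "2 * \<bar>Im z\<bar> \<le> \<bar>Im (exp z)\<bar>"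
proof -
  have "exp (ln 4) \<le> exp (Re z)" using assms(2) by (rule exp_mono)
  then have "4 \<le> exp (Re z)" by simp
  then have "4 * (\<bar>Im z\<bar> / 2) \<le> exp (Re z) * \<bar>sin (Im z)\<bar>"
    using abs_sin_ge_small[OF assms(1)] by (intro mult_mono) auto
  then show ?thesis by (simp add: Im_exp abs_mult)
qed

text \<open>An exp-orbit off the real axis cannot stay in the strip |Im z| < 1 forever:
  its real part tends to infinity, after which the imaginary part grows geometrically.\<close>
lemma orbit_leaves_strip:
  fixes z :: "nat \<Rightarrow> complex"
  assumes orbit: "\<And>n. z (Suc n) = exp (z n)"
    and strip: "\<And>n. N \<le> n \<Longrightarrow> \<bar>Im (z n)\<bar> < 1" and off: "\<And>n. Im (z n) \<noteq> 0"
  shows False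
proof -
  have Re_grows: "Re (z N) + real k * (1 - ln 2) \<le> Re (z (N + k))" for k
  proof (induction k)
    case (Suc k)
    then show ?case using Re_exp_grows_in_strip[OF strip[of "N + k"]] by (simp add: orbit algebra_simps)
  qed simp
  have ln2: "ln 2 < (1::real)" by (rule ln_2_less_1)
  obtain k0 :: nat where k0: "(ln 4 - Re (z N)) / (1 - ln 2) \<le> real k0"
    using real_arch_simple by blast
  define N' where "N' = N + k0"
  have far_right: "ln 4 \<le> Re (z n)" if "N' \<le> n" for n
  proof -
    define k where "k = n - N"
    have k: "n = N + k" "k0 \<le> k" using that by (auto simp: k_def N'_def)
    have "ln 4 - Re (z N) \<le> real k0 * (1 - ln 2)" using k0 ln2 by (simp add: field_simps)
    also have "\<dots> \<le> real k * (1 - ln 2)" using k ln2 by (intro mult_right_mono) auto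
    finally show ?thesis using Re_grows[of k] k by simp
  qed
  have grows: "2 ^ j * \<bar>Im (z N')\<bar> \<le> \<bar>Im (z (N' + j))\<bar>" for j
  proof (induction j)
    case (Suc j)
    have "N \<le> N' + j" by (simp add: N'_def)
    then have "2 * \<bar>Im (z (N' + j))\<bar> \<le> \<bar>Im (z (Suc (N' + j)))\<bar>"
      using abs_Im_exp_doubles[OF strip far_right] by (simp add: orbit)
    with Suc show ?case by simp
  qed simp
  obtain j where "1 / \<bar>Im (z N')\<bar> < 2 ^ j" using real_arch_pow[of 2 "1 / \<bar>Im (z N')\<bar>"] by auto
  then have "1 < 2 ^ j * \<bar>Im (z N')\<bar>" using off[of N'] by (simp add: field_simps)
  moreover have "\<bar>Im (z (N' + j))\<bar> < 1" by (rule strip) (simp add: N'_def)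
  ultimately show False using grows[of j] by linarith
qed

text \<open>If the multipliers of an exp-orbit off the real axis are bounded by a multiple of
  the imaginary parts, only finitely many orbit points are 1 away from the real axis:
  each such visit contracts the imaginary part by 13/15 relative to the multiplier.\<close>
lemma far_from_real_axis_finitely_often:
  fixes z :: "nat \<Rightarrow> complex"
  assumes orbit: "\<And>n. z (Suc n) = exp (z n)" and off: "\<And>n. Im (z n) \<noteq> 0"
    and bound: "\<And>n. (\<Prod>i<n. cmod (exp (z i))) \<le> C * \<bar>Im (z n)\<bar>"
  shows "finite {n. 1 \<le> \<bar>Im (z n)\<bar>}"
proof (rule ccontr)
  assume inf: "infinite {n. 1 \<le> \<bar>Im (z n)\<bar>}"
  define \<theta> where "\<theta> i = imag_contraction (Im (z i))" for i
  have \<theta>: "0 \<le> \<theta> i" "\<theta> i \<le> 1" for i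
    using imag_contraction_pos imag_contraction_le_1 by (auto simp: \<theta>_def less_imp_le)
  have telescope: "\<bar>Im (z n)\<bar> \<le> (\<Prod>i<n. cmod (exp (z i))) * (\<Prod>i<n. \<theta> i) * \<bar>Im (z 0)\<bar>" for n
  proof (induction n)
    case (Suc n)
    have "\<bar>Im (z (Suc n))\<bar> \<le> cmod (exp (z n)) * \<theta> n * \<bar>Im (z n)\<bar>"
      using abs_Im_exp_le[of "z n"] by (simp add: orbit \<theta>_def)
    also have "\<dots> \<le> cmod (exp (z n)) * \<theta> n *
                     ((\<Prod>i<n. cmod (exp (z i))) * (\<Prod>i<n. \<theta> i) * \<bar>Im (z 0)\<bar>)"
      using Suc \<theta> by (intro mult_left_mono) auto
    finally show ?case by (simp add: algebra_simps)
  qed simp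
  have "1 \<le> C * \<bar>Im (z 0)\<bar>" using bound[of 0] by simp
  then have C: "0 < C * \<bar>Im (z 0)\<bar>" by linarith
  have prod_large: "1 \<le> C * \<bar>Im (z 0)\<bar> * (\<Prod>i<n. \<theta> i)" for n
  proof -
    have "\<bar>Im (z n)\<bar> \<le> C * \<bar>Im (z n)\<bar> * (\<Prod>i<n. \<theta> i) * \<bar>Im (z 0)\<bar>"
      using telescope[of n] bound[of n] \<theta>(1)
      by (meson abs_ge_zero mult_right_mono order_trans prod_nonneg)
    then show ?thesis using off[of n] by (simp add: algebra_simps)
  qed
  obtain K where K: "(13/15::real)^K < 1 / (C * \<bar>Im (z 0)\<bar>)"
    using real_arch_pow_inv[of "1 / (C * \<bar>Im (z 0)\<bar>)" "13/15"] C by auto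
  obtain V where V: "finite V" "card V = K" "V \<subseteq> {n. 1 \<le> \<bar>Im (z n)\<bar>}"
    using infinite_arbitrarily_large[OF inf] by blast
  obtain n where n: "V \<subseteq> {..<n}" using finite_nat_bounded[OF V(1)] by blast
  have "(\<Prod>i<n. \<theta> i) = (\<Prod>i\<in>{..<n} - V. \<theta> i) * (\<Prod>i\<in>V. \<theta> i)"
    using prod.subset_diff[OF n] by simp
  also have "(\<Prod>i\<in>V. \<theta> i) = (13/15)^K"
    using V by (simp add: \<theta>_def imag_contraction_def subset_iff)
  also have "(\<Prod>i\<in>{..<n} - V. \<theta> i) * (13/15)^K \<le> 1 * (13/15)^K"
    using \<theta> by (intro mult_right_mono prod_le_1) auto
  finally have "(\<Prod>i<n. \<theta> i) < 1 / (C * \<bar>Im (z 0)\<bar>)" using K by simp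
  then have "(\<Prod>i<n. \<theta> i) * (C * \<bar>Im (z 0)\<bar>) < 1" using C by (simp add: pos_less_divide_eq)
  with prod_large[of n] show False by (simp add: mult.commute)
qed

lemma orbit_meets_real_axis:
  assumes r: "r > 0"
  shows "\<exists>w\<in>ball c r. \<exists>m. Im ((exp ^^ m) w) = 0"
proof (rule ccontr)
  assume "\<not> ?thesis"
  then have off: "\<And>w m. w \<in> ball c r \<Longrightarrow> Im ((exp ^^ m) w) \<noteq> 0" by auto
  define z where "z n = (exp ^^ n) c" for n
  have orbit: "z (Suc n) = exp (z n)" for n by (simp add: z_def)
  have off_c: "Im (z n) \<noteq> 0" for n using off[of c] r by (simp add: z_def)
  have "(\<Prod>i<n. cmod (exp (z i))) \<le> 2 / r * \<bar>Im (z n)\<bar>" for n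
    using iterate_derivative_bound_off_real[OF r off] by (simp add: z_def)
  then have "finite {n. 1 \<le> \<bar>Im (z n)\<bar>}"
    using far_from_real_axis_finitely_often[of z "2 / r"] orbit off_c by blast
  then obtain N where "{n. 1 \<le> \<bar>Im (z n)\<bar>} \<subseteq> {..<N}" using finite_nat_bounded by blast
  then have "\<bar>Im (z n)\<bar> < 1" if "N \<le> n" for n using that by (auto simp: subset_iff not_le)
  then show False using orbit_leaves_strip[of z N] orbit off_c by blast
qed

section \<open>Shadowing closed pseudo-orbits\<close>

definition backward_comp :: "(nat \<Rightarrow> 'a \<Rightarrow> 'a) \<Rightarrow> nat \<Rightarrow> nat \<Rightarrow> 'a \<Rightarrow> 'a" where
  "backward_comp G i n = foldr (\<lambda>j h. G j \<circ> h) [i..<n] id"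

lemma backward_comp_self [simp]: "backward_comp G n n = id"
  by (simp add: backward_comp_def)

lemma backward_comp_step: "i < n \<Longrightarrow> backward_comp G i n = G i \<circ> backward_comp G (Suc i) n"
  by (simp add: backward_comp_def upt_conv_Cons)

lemma backward_comp_maps:
  assumes maps: "\<And>i u. i < n \<Longrightarrow> u \<in> B (Suc i) \<Longrightarrow> G i u \<in> B i"
    and "i \<le> n" and "u \<in> B n"
  shows "backward_comp G i n u \<in> B i"
  using \<open>i \<le> n\<close>
proof (induction i rule: inc_induct)
  case (step i)
  then show ?case using maps by (simp add: backward_comp_step)
qed (use \<open>u \<in> B n\<close> in simp)

lemma backward_comp_lipschitz:
  fixes G :: "nat \<Rightarrow> 'a::metric_space \<Rightarrow> 'a"
  assumes maps: "\<And>i u. i < n \<Longrightarrow> u \<in> B (Suc i) \<Longrightarrow> G i u \<in> B i"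
    and lip: "\<And>i u v. i < n \<Longrightarrow> u \<in> B (Suc i) \<Longrightarrow> v \<in> B (Suc i) \<Longrightarrow>
                dist (G i u) (G i v) \<le> L i * dist u v"
    and L: "\<And>i. 0 \<le> L i" and "i \<le> n" and u: "u \<in> B n" and v: "v \<in> B n"
  shows "dist (backward_comp G i n u) (backward_comp G i n v) \<le> (\<Prod>j\<in>{i..<n}. L j) * dist u v"
  using \<open>i \<le> n\<close>
proof (induction i rule: inc_induct)
  case (step i)
  let ?H = "backward_comp G (Suc i) n"
  have "?H u \<in> B (Suc i)" "?H v \<in> B (Suc i)"
    using backward_comp_maps[of n B G, OF maps] step(2) u v by auto
  then have "dist (G i (?H u)) (G i (?H v)) \<le> L i * dist (?H u) (?H v)"
    using lip step(2) by blast
  also have "\<dots> \<le> L i * ((\<Prod>j\<in>{Suc i..<n}. L j) * dist u v)"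
    using step(3) L by (rule mult_left_mono)
  finally show ?case using step(2) by (simp add: backward_comp_step prod.atLeast_Suc_lessThan)
qed simp

lemma backward_comp_right_inverse:
  assumes maps: "\<And>i u. i < n \<Longrightarrow> u \<in> B (Suc i) \<Longrightarrow> G i u \<in> B i"
    and inv: "\<And>i u. i < n \<Longrightarrow> u \<in> B (Suc i) \<Longrightarrow> F (G i u) = u"
    and "j \<le> n" and u: "u \<in> B n"
  shows "(F ^^ j) (backward_comp G 0 n u) = backward_comp G j n u"
  using \<open>j \<le> n\<close>
proof (induction j)
  case (Suc j)
  have "backward_comp G (Suc j) n u \<in> B (Suc j)"
    using backward_comp_maps[of n B G, OF maps] Suc.prems u by blast
  then show ?case
    using Suc inv[of j] by (simp add: backward_comp_step)
qed simp

lemma Ln_lipschitz_near_1: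
  assumes "s \<in> cball 1 (1/2)" "t \<in> cball 1 (1/2)"
  shows "cmod (Ln s - Ln t) \<le> 2 * cmod (s - t)"
proof (rule field_differentiable_bound[where S="cball 1 (1/2)" and f'=inverse])
  show "(Ln has_field_derivative inverse z) (at z within cball 1 (1/2))" if "z \<in> cball 1 (1/2)" for z
  proof -
    have "\<bar>Re (1 - z)\<bar> \<le> cmod (1 - z)" by (rule abs_Re_le_cmod)
    then have "Re z > 0" using that by (simp add: dist_norm)
    then have "z \<notin> \<real>\<^sub>\<le>\<^sub>0" by (auto simp: nonpos_Reals_def)
    then show ?thesis by (rule has_field_derivative_at_within[OF has_field_derivative_Ln])
  qed
  show "cmod (inverse z) \<le> 2" if "z \<in> cball 1 (1/2)" for z
  proof -
    have "cmod (1::complex) \<le> cmod z + cmod (1 - z)" by (rule norm_triangle_sub)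
    then have "1/2 \<le> cmod z" using that by (simp add: dist_norm)
    then have "inverse (cmod z) \<le> inverse (1/2)" by (rule le_imp_inverse_le) simp
    then show ?thesis by (simp add: norm_inverse)
  qed
qed (use assms in auto)

lemma quotient_near_1:
  fixes u w :: complex
  assumes "w \<noteq> 0" and "cmod (u - w) \<le> cmod w / 2"
  shows "u / w \<in> cball 1 (1/2)"
proof -
  have "1 - u / w = (w - u) / w" using assms(1) by (simp add: field_simps)
  then have "dist 1 (u / w) = cmod (u - w) / cmod w"
    by (simp add: dist_norm norm_divide norm_minus_commute)
  also have "\<dots> \<le> (cmod w / 2) / cmod w" using assms(2) by (rule divide_right_mono) simp
  finally show ?thesis using assms(1) by simp
qed

lemma exp_local_inverse:
  fixes z u :: complex
  assumes u: "cmod (u - exp z) \<le> cmod (exp z) / 2"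
  shows "exp (z + Ln (u / exp z)) = u"
    and "cmod (Ln (u / exp z)) \<le> 2 * cmod (u - exp z) / cmod (exp z)"
    and "cmod (exp z) / 2 \<le> cmod u"
proof -
  have "cmod (exp z) \<le> cmod u + cmod (u - exp z)"
    using norm_triangle_sub[of "exp z" u] by (simp add: norm_minus_commute)
  then show lower: "cmod (exp z) / 2 \<le> cmod u" using u by linarith
  then have "u \<noteq> 0" by auto
  then show "exp (z + Ln (u / exp z)) = u" by (simp add: exp_add)
  have "cmod (Ln (u / exp z) - Ln 1) \<le> 2 * cmod (u / exp z - 1)"
    by (rule Ln_lipschitz_near_1[OF quotient_near_1[OF _ u]]) simp_all
  moreover have "u / exp z - 1 = (u - exp z) / exp z" by (simp add: field_simps)
  ultimately show "cmod (Ln (u / exp z)) \<le> 2 * cmod (u - exp z) / cmod (exp z)"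
    by (simp add: norm_divide)
qed

lemma exp_local_inverse_lipschitz:
  fixes z u v :: complex
  assumes "cmod (u - exp z) \<le> cmod (exp z) / 2" and "cmod (v - exp z) \<le> cmod (exp z) / 2"
  shows "dist (z + Ln (u / exp z)) (z + Ln (v / exp z)) \<le> 2 / cmod (exp z) * dist u v"
proof -
  have "cmod (Ln (u / exp z) - Ln (v / exp z)) \<le> 2 * cmod (u / exp z - v / exp z)"
    by (rule Ln_lipschitz_near_1[OF quotient_near_1 quotient_near_1]) (use assms in simp_all)
  moreover have "u / exp z - v / exp z = (u - v) / exp z" by (simp add: diff_divide_distrib)
  ultimately show ?thesis by (simp add: dist_norm norm_divide)
qed

lemma log_branch_step:
  fixes c c' u :: complex
  assumes step: "cmod (c' - exp c) + \<rho>' \<le> cmod (exp c) * min 1 \<rho> / 2" and u: "u \<in> cball c' \<rho>'"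
  shows "c + Ln (u / exp c) \<in> cball c \<rho>" and "exp (c + Ln (u / exp c)) = u"
    and "cmod (exp c) / 2 \<le> cmod u" and "cmod (u - exp c) \<le> cmod (exp c) / 2"
proof -
  have E: "0 < cmod (exp c)" by simp
  have "cmod (u - exp c) \<le> cmod (u - c') + cmod (c' - exp c)"
    by (rule norm_diff_triangle_le[of u c']) simp_all
  moreover have "cmod (u - c') \<le> \<rho>'" using u by (simp add: dist_norm norm_minus_commute)
  ultimately have near: "cmod (u - exp c) \<le> cmod (exp c) * min 1 \<rho> / 2" using step by linarith
  moreover have "cmod (exp c) * min 1 \<rho> \<le> cmod (exp c) * 1" using E by (intro mult_left_mono) auto
  ultimately show near_half: "cmod (u - exp c) \<le> cmod (exp c) / 2" by linarith
  show "exp (c + Ln (u / exp c)) = u" and "cmod (exp c) / 2 \<le> cmod u"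
    using exp_local_inverse(1,3)[OF near_half] by simp_all
  have "cmod (Ln (u / exp c)) \<le> 2 * cmod (u - exp c) / cmod (exp c)"
    by (rule exp_local_inverse(2)[OF near_half])
  also have "\<dots> \<le> 2 * (cmod (exp c) * min 1 \<rho> / 2) / cmod (exp c)"
    using near E by (intro divide_right_mono mult_left_mono) auto
  also have "\<dots> \<le> \<rho>" using E by simp
  finally show "c + Ln (u / exp c) \<in> cball c \<rho>" by (simp add: dist_norm)
qed

text \<open>Let c_0, ..., c_n = c_0 be a closed pseudo-orbit of exp with radii
  rho_i such that every jump |c_(i+1) - exp c_i| plus the next radius is at most
  |exp c_i| min(1, rho_i)/2, and whose expansion prod |exp c_i|/2 exceeds 1.  Then the
  branches of log along the pseudo-orbit compose to a contraction of the disc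
  B(c_0, rho_0) into itself, whose fixed point is a repelling periodic point.\<close>
lemma shadowing_closed_pseudo_orbit:
  fixes c :: "nat \<Rightarrow> complex" and \<rho> :: "nat \<Rightarrow> real"
  assumes n: "1 \<le> n" and closed: "c n = c 0" "\<rho> n = \<rho> 0" and \<rho>: "\<And>i. 0 < \<rho> i"
    and step: "\<And>i. i < n \<Longrightarrow>
      cmod (c (Suc i) - exp (c i)) + \<rho> (Suc i) \<le> cmod (exp (c i)) * min 1 (\<rho> i) / 2"
    and expanding: "(\<Prod>i<n. 2 / cmod (exp (c i))) < 1"
  shows "\<exists>p\<in>cball (c 0) (\<rho> 0). repelling_periodic_point exp p"
proof -
  define E where "E i = cmod (exp (c i))" for i
  have E: "0 < E i" for i by (simp add: E_def)
  define B where "B i = cball (c i) (\<rho> i)" for i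
  define G where "G i u = c i + Ln (u / exp (c i))" for i u
  note branch = log_branch_step[OF step, folded B_def]
  have maps: "G i u \<in> B i" if "i < n" "u \<in> B (Suc i)" for i u
    using branch(1)[OF that] by (simp add: G_def B_def)
  have inv: "exp (G i u) = u" if "i < n" "u \<in> B (Suc i)" for i u
    using branch(2)[OF that] by (simp add: G_def)
  have lower: "E i / 2 \<le> cmod u" if "i < n" "u \<in> B (Suc i)" for i u
    using branch(3)[OF that] by (simp add: E_def)
  have lip: "dist (G i u) (G i v) \<le> 2 / E i * dist u v"
    if "i < n" "u \<in> B (Suc i)" "v \<in> B (Suc i)" for i u v
    using exp_local_inverse_lipschitz[OF branch(4) branch(4)] that by (simp add: G_def E_def)
  define H where "H = backward_comp G 0 n"
  define L where "L = (\<Prod>i<n. 2 / E i)"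
  have L: "0 < L" "L < 1"
    using expanding E by (auto simp: L_def E_def intro!: prod_pos)
  have Bn: "B n = B 0" by (simp add: B_def closed)
  have "\<exists>!p\<in>B 0. H p = p"
  proof (rule Banach_fix)
    show "complete (B 0)" by (simp add: B_def complete_eq_closed)
    show "B 0 \<noteq> {}" using \<rho>[of 0] by (simp add: B_def less_imp_le)
    show "H ` B 0 \<subseteq> B 0"
    proof
      fix y assume "y \<in> H ` B 0"
      then obtain x where "x \<in> B 0" "y = H x" by blast
      then show "y \<in> B 0" using backward_comp_maps[of n B G 0 x, OF maps] Bn by (simp add: H_def)
    qed
    show "dist (H x) (H y) \<le> L * dist x y" if "x \<in> B 0" "y \<in> B 0" for x y
      using backward_comp_lipschitz[of n B G "\<lambda>i. 2 / E i" 0, OF maps lip] that Bn E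
      by (simp add: H_def L_def atLeast0LessThan order.strict_implies_order)
  qed (use L in auto)
  then obtain p where p: "p \<in> B 0" "H p = p" by blast
  have orbit: "(exp ^^ j) p = backward_comp G j n p" if "j \<le> n" for j
    using backward_comp_right_inverse[of n B G exp j p, OF maps inv that] p Bn by (simp add: H_def)
  have "(\<Prod>i<n. E i / 2) \<le> (\<Prod>i<n. cmod (exp ((exp ^^ i) p)))"
  proof (rule prod_mono)
    fix i assume "i \<in> {..<n}"
    then have "exp ((exp ^^ i) p) \<in> B (Suc i)"
      using orbit[of "Suc i"] backward_comp_maps[of n B G "Suc i" p, OF maps] p Bn by auto
    then show "0 \<le> E i / 2 \<and> E i / 2 \<le> cmod (exp ((exp ^^ i) p))"
      using lower[of i "exp ((exp ^^ i) p)"] \<open>i \<in> {..<n}\<close> E[of i] by auto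
  qed
  moreover have "(\<Prod>i<n. E i / 2) = inverse L"
    unfolding L_def by (simp add: prod_inversef[symmetric] o_def)
  moreover have "1 < inverse L" using L by (rule one_less_inverse)
  ultimately have "repelling_periodic_point exp p"
    using repelling_of_large_multiplier[OF n] orbit[of n] by simp
  then show ?thesis using p by (auto simp: B_def)
qed

section \<open>Closing up the orbit of a point that reaches the real axis\<close>

lemma real_orbit_escapes:
  assumes "Im ((exp ^^ m) c) = 0"
  shows "\<exists>K. \<forall>j\<ge>K. \<exists>x. (exp ^^ j) c = of_real x \<and> T \<le> x"
proof -
  define x0 where "x0 = Re ((exp ^^ m) c)"
  have linear: "\<exists>x. (exp ^^ (m + k)) c = of_real x \<and> x0 + real k \<le> x" for k
  proof (induction k)
    case 0
    show ?case using assms by (auto simp: x0_def complex_eq_iff)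
  next
    case (Suc k)
    then obtain x where x: "(exp ^^ (m + k)) c = of_real x" "x0 + real k \<le> x" by blast
    have "(exp ^^ (m + Suc k)) c = of_real (exp x)" using x(1) by (simp add: exp_of_real)
    moreover have "x0 + real (Suc k) \<le> exp x"
      using x(2) exp_ge_add_one_self[of x] unfolding of_nat_Suc by linarith
    ultimately show ?case by blast
  qed
  define K where "K = m + nat \<lceil>T - x0\<rceil>"
  have "\<exists>x. (exp ^^ j) c = of_real x \<and> T \<le> x" if "K \<le> j" for j
  proof -
    obtain x where x: "(exp ^^ (m + (j - m))) c = of_real x" "x0 + real (j - m) \<le> x"
      using linear by blast
    moreover have "m + (j - m) = j" using that by (simp add: K_def)
    moreover have "T - x0 \<le> real (nat \<lceil>T - x0\<rceil>)" by (rule real_nat_ceiling_ge)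
    then have "T - x0 \<le> real (j - m)" using that by (simp add: K_def)
    ultimately show ?thesis by auto
  qed
  then show ?thesis by blast
qed

text \<open>A point c \<noteq> 0 has exp-preimages b = Ln c + 2 pi k i of arbitrarily large modulus;
  choosing |b| comparable to exp X places Ln b within ln 2 + pi of the real number X.\<close>
lemma exp_preimage_near_log:
  fixes c :: complex and X :: real
  assumes c: "c \<noteq> 0" and X: "2 * cmod (Ln c) + 4 * pi \<le> X"
  shows "\<exists>b. exp b = c \<and> 2 \<le> cmod b \<and> cmod (Ln b - of_real X) \<le> ln 2 + pi"
proof -
  define A where "A = cmod (Ln c)"
  define Y where "Y = exp X"
  have "1 + X \<le> Y" unfolding Y_def by (rule exp_ge_add_one_self)
  moreover have "0 < Y" by (simp add: Y_def)
  ultimately have Y: "0 < Y" "2 * A + 4 * pi \<le> Y" using X unfolding A_def by linarith+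
  define k where "k = \<lceil>Y / (2 * pi)\<rceil>"
  have k: "Y \<le> 2 * pi * k" "2 * pi * k \<le> Y + 2 * pi"
  proof -
    have "Y / (2 * pi) \<le> k" "k < Y / (2 * pi) + 1" unfolding k_def by linarith+
    then show "Y \<le> 2 * pi * k" "2 * pi * k \<le> Y + 2 * pi" by (simp_all add: field_simps)
  qed
  define w where "w = of_real (2 * pi * k) * \<i>"
  define b where "b = Ln c + w"
  have "exp w = 1" using exp_integer_2pi[of "of_int k"] by (simp add: w_def mult.commute)
  then have expb: "exp b = c" using c by (simp add: b_def exp_add)
  have "0 < 2 * pi * real_of_int k" using k(1) Y(1) by linarith
  then have "0 < real_of_int k" using pi_gt_zero by (simp add: zero_less_mult_iff)
  then have w: "cmod w = 2 * pi * k" by (simp add: w_def norm_mult)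
  have "cmod w \<le> cmod b + A" "cmod b \<le> cmod w + A"
    using norm_triangle_ineq2[of w b] norm_triangle_ineq[of "Ln c" w]
    by (simp_all add: b_def A_def norm_minus_commute)
  then have b: "Y / 2 \<le> cmod b" "cmod b \<le> 2 * Y" using k w Y pi_gt_zero by linarith+
  then have b0: "b \<noteq> 0" using Y by auto
  have "ln (Y / 2) \<le> ln (cmod b)" "ln (cmod b) \<le> ln (2 * Y)" using b b0 Y by simp_all
  moreover have "ln (Y / 2) = X - ln 2" "ln (2 * Y) = X + ln 2"
    by (simp_all add: Y_def ln_div ln_mult)
  ultimately have "\<bar>Re (Ln b - of_real X)\<bar> \<le> ln 2" using b0 by simp
  moreover have "\<bar>Im (Ln b - of_real X)\<bar> \<le> pi"
    using mpi_less_Im_Ln[OF b0] Im_Ln_le_pi[OF b0] by simp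
  ultimately have "cmod (Ln b - of_real X) \<le> ln 2 + pi" using cmod_le[of "Ln b - of_real X"] by linarith
  moreover have "2 \<le> cmod b" using b Y pi_gt3 norm_ge_zero[of "Ln c"] unfolding A_def by linarith
  ultimately show ?thesis using expb by blast
qed

lemma half_products_unbounded:
  fixes E :: "nat \<Rightarrow> real"
  assumes pos: "\<And>j. 0 < E j" and large: "\<And>j. K \<le> j \<Longrightarrow> 4 \<le> E j"
  shows "\<exists>i. R \<le> (\<Prod>j<i. E j / 2)"
proof -
  define P where "P i = (\<Prod>j<i. E j / 2)" for i
  have P: "0 < P i" for i using pos by (simp add: P_def prod_pos)
  have grows: "2 ^ k * P K \<le> P (K + k)" for k
  proof (induction k)
    case (Suc k)
    have "2 * P (K + k) \<le> P (K + k) * (E (K + k) / 2)"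
      using large[of "K + k"] P[of "K + k"] by simp
    with Suc show ?case by (simp add: P_def)
  qed simp
  obtain k where "R / P K < 2 ^ k" using real_arch_pow[of 2 "R / P K"] by auto
  then have "R \<le> 2 ^ k * P K" using P[of K] by (simp add: field_simps)
  then show ?thesis using grows[of k] unfolding P_def by (meson order_trans)
qed

lemma radius_schedule:
  fixes D :: "nat \<Rightarrow> real"
  assumes pos: "\<And>i. 0 < D i" and unbounded: "\<And>B. \<exists>i. B \<le> D i" and R: "0 < R"
  shows "\<exists>\<rho> M. 0 < \<rho> \<and> \<rho> \<le> R \<and> K \<le> M \<and> (\<forall>i<M. \<rho> * D i < 1) \<and> 1 \<le> \<rho> * D M"
proof -
  define S where "S = (\<Sum>i\<le>K. D i)"
  have S: "0 \<le> S" unfolding S_def using pos by (simp add: sum_nonneg less_imp_le)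
  define \<rho> where "\<rho> = min R (1 / (1 + S))"
  have \<rho>: "0 < \<rho>" "\<rho> \<le> R" using R S by (auto simp: \<rho>_def)
  have small: "\<rho> * D i < 1" if "i \<le> K" for i
  proof -
    have "D i \<le> S" unfolding S_def using that pos by (intro member_le_sum) (auto simp: less_imp_le)
    then have "1 / (1 + S) * D i < 1" using S by (simp add: field_simps)
    moreover have "\<rho> * D i \<le> 1 / (1 + S) * D i"
      using pos[of i] by (intro mult_right_mono) (auto simp: \<rho>_def)
    ultimately show ?thesis by linarith
  qed
  have ex: "\<exists>i. 1 \<le> \<rho> * D i"
    using unbounded[of "1 / \<rho>"] \<rho> by (auto simp: field_simps)
  define M where "M = (LEAST i. 1 \<le> \<rho> * D i)"
  have "1 \<le> \<rho> * D M" unfolding M_def by (rule LeastI_ex[OF ex])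
  moreover have "\<rho> * D i < 1" if "i < M" for i
    using not_less_Least[of i "\<lambda>i. 1 \<le> \<rho> * D i"] that by (simp add: M_def)
  moreover have "K \<le> M"
  proof (rule ccontr)
    assume "\<not> K \<le> M"
    then have "\<rho> * D M < 1" using small by simp
    with \<open>1 \<le> \<rho> * D M\<close> show False by simp
  qed
  ultimately show ?thesis using \<rho> by blast
qed

text \<open>The closed pseudo-orbit: follow the orbit of c up to step M, where it sits at
  the large real number X, jump to Ln b, go to b and return to c = exp b.  The radii
  rho D_i grow along the true orbit segment until they reach 1 at step M.\<close>
lemma closed_pseudo_orbit_through_real_axis:
  fixes c b :: complex and X \<rho> :: real and M :: nat
  defines "D \<equiv> \<lambda>i. \<Prod>j<i. cmod (exp ((exp ^^ j) c)) / 2"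
  assumes c: "c \<noteq> 0" and \<rho>: "0 < \<rho>" "\<rho> \<le> cmod c / 2"
    and below: "\<And>i. i < M \<Longrightarrow> \<rho> * D i < 1" and above: "1 \<le> \<rho> * D M"
    and X: "exp ((exp ^^ M) c) = of_real X" "12 \<le> X"
    and b: "exp b = c" "2 \<le> cmod b" "cmod (Ln b - of_real X) \<le> ln 2 + pi"
  shows "\<exists>p\<in>cball c \<rho>. repelling_periodic_point exp p"
proof -
  define cs where "cs i = (if i \<le> M then (exp ^^ i) c else if i = Suc M then Ln b
                           else if i = Suc (Suc M) then b else c)" for i
  define rs where "rs i = (if i \<le> M then \<rho> * D i else if i = M + 3 then \<rho> else 1)" for i
  have D: "0 < D i" for i unfolding D_def by (rule prod_pos) simp
  have b0: "b \<noteq> 0" using b(2) by auto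
  have step: "cmod (cs (Suc i) - exp (cs i)) + rs (Suc i) \<le> cmod (exp (cs i)) * min 1 (rs i) / 2"
    if "i < M + 3" for i
  proof -
    have "i < M \<or> i = M \<or> i = Suc M \<or> i = Suc (Suc M)" using that by arith
    then consider "i < M" | "i = M" | "i = Suc M" | "i = Suc (Suc M)" by blast
    then show ?thesis
    proof cases
      case 1
      then have "cs (Suc i) = exp (cs i)" "min 1 (rs i) = \<rho> * D i"
        "rs (Suc i) = \<rho> * D i * (cmod (exp (cs i)) / 2)"
        using below[OF 1] by (simp_all add: cs_def rs_def D_def)
      then show ?thesis by simp
    next
      case 2
      have "ln 2 + pi + 1 \<le> X / 2" using X(2) ln_2_less_1 pi_less_4 by linarith
      moreover have "min 1 (rs i) = 1" using 2 above by (simp add: rs_def)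
      ultimately show ?thesis using 2 X b(3) by (simp add: cs_def rs_def)
    next
      case 3
      then show ?thesis using b(2) b0 by (simp add: cs_def rs_def)
    next
      case 4
      then show ?thesis using b(1) \<rho>(2) by (simp add: cs_def rs_def)
    qed
  qed
  have expanding: "(\<Prod>i<M + 3. 2 / cmod (exp (cs i))) < 1"
  proof -
    have X0: "0 < X" and b1: "0 < cmod b" and c1: "0 < cmod c" using X(2) b(2) c by auto
    have "(\<Prod>i<M. 2 / cmod (exp (cs i))) = inverse (D M)"
      by (simp add: D_def cs_def prod_inversef[symmetric] o_def)
    also have "\<dots> \<le> \<rho>" using above D[of M] by (simp add: field_simps)
    finally have head: "(\<Prod>i<M. 2 / cmod (exp (cs i))) \<le> cmod c / 2" using \<rho>(2) by linarith
    have "(\<Prod>i<M + 3. 2 / cmod (exp (cs i))) =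
          (\<Prod>i<M. 2 / cmod (exp (cs i))) * (2 / cmod (exp (cs M))) *
          (2 / cmod (exp (cs (Suc M)))) * (2 / cmod (exp (cs (Suc (Suc M)))))"
      by (simp add: numeral_3_eq_3)
    also have "\<dots> = (\<Prod>i<M. 2 / cmod (exp (cs i))) * (2 / X) * (2 / cmod b) * (2 / cmod c)"
      using X b b0 by (simp add: cs_def)
    also have "\<dots> \<le> (cmod c / 2) * (2 / X) * (2 / cmod b) * (2 / cmod c)"
      using head X0 b1 c1 by (intro mult_right_mono) simp_all
    also have "\<dots> = 4 / (X * cmod b)" using c1 by (simp add: field_simps)
    also have "\<dots> < 1"
    proof -
      have "12 * 2 \<le> X * cmod b" using X(2) b(2) by (intro mult_mono) simp_all
      then show ?thesis using X0 b1 by (simp add: divide_less_eq)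
    qed
    finally show ?thesis .
  qed
  have closed: "cs (M + 3) = cs 0" "rs (M + 3) = rs 0" by (simp_all add: cs_def rs_def D_def)
  have rs: "0 < rs i" for i using \<rho>(1) D[of i] by (simp add: rs_def)
  have "\<exists>p\<in>cball (cs 0) (rs 0). repelling_periodic_point exp p"
    by (rule shadowing_closed_pseudo_orbit[OF _ closed rs step expanding]) simp_all
  then show ?thesis by (simp add: cs_def rs_def D_def)
qed
lemma repelling_point_near_orbit_to_real_axis:
  assumes c: "c \<noteq> 0" and m: "Im ((exp ^^ m) c) = 0" and r: "0 < r"
  shows "\<exists>p\<in>cball c r. repelling_periodic_point exp p"
proof -
  define T where "T = 12 + 2 * cmod (Ln c) + 4 * pi"
  have T: "12 \<le> T" "2 * cmod (Ln c) + 4 * pi \<le> T" using pi_gt_zero by (auto simp: T_def)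
  obtain K where K: "\<And>j. K \<le> j \<Longrightarrow> \<exists>x. (exp ^^ j) c = of_real x \<and> T \<le> x"
    using real_orbit_escapes[OF m, of T] by blast
  define E where "E j = cmod (exp ((exp ^^ j) c))" for j
  have "4 \<le> E j" if j: "K \<le> j" for j
  proof -
    obtain x where "(exp ^^ Suc j) c = of_real x" "T \<le> x" using K[of "Suc j"] j by auto
    then show ?thesis using T by (simp add: E_def)
  qed
  then have "\<exists>i. B \<le> (\<Prod>j<i. E j / 2)" for B
    by (intro half_products_unbounded) (auto simp: E_def)
  then obtain \<rho> M where \<rho>: "0 < \<rho>" "\<rho> \<le> min r (cmod c / 2)"
    and M: "K \<le> M" "\<And>i. i < M \<Longrightarrow> \<rho> * (\<Prod>j<i. E j / 2) < 1" "1 \<le> \<rho> * (\<Prod>j<M. E j / 2)"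
    using radius_schedule[of "\<lambda>i. \<Prod>j<i. E j / 2" "min r (cmod c / 2)" K] r c
    by (auto simp: E_def prod_pos)
  obtain X where X: "exp ((exp ^^ M) c) = of_real X" "T \<le> X" using K[of "Suc M"] M(1) by auto
  obtain b where "exp b = c" "2 \<le> cmod b" "cmod (Ln b - of_real X) \<le> ln 2 + pi"
    using exp_preimage_near_log[OF c, of X] X T by auto
  then have "\<exists>p\<in>cball c \<rho>. repelling_periodic_point exp p"
    using closed_pseudo_orbit_through_real_axis[OF c \<rho>(1) _ _ _ X(1)] \<rho> M X T
    by (simp add: E_def)
  moreover have "cball c \<rho> \<subseteq> cball c r" using \<rho>(2) by auto
  ultimately show ?thesis by blast
qed

theorem mainTheorem15:
  fixes U :: "complex set"
  assumes "open U" and "U \<noteq> {}"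
  shows "\<exists>p\<in>U. repelling_periodic_point exp p"
proof -
  have "U \<noteq> {0}" using assms(1) not_open_singleton by metis
  with assms(2) have "U - {0} \<noteq> {}" by blast
  moreover have "open (U - {0})" using assms(1) by (simp add: open_Diff)
  ultimately obtain c1 e where "0 < e" "ball c1 e \<subseteq> U - {0}"
    using open_contains_ball by blast
  then obtain c m where c: "c \<in> U" "c \<noteq> 0" "Im ((exp ^^ m) c) = 0"
    using orbit_meets_real_axis[of e c1] by blast
  obtain r where "0 < r" "cball c r \<subseteq> U" using assms(1) c(1) open_contains_cball by blast
  then show ?thesis using repelling_point_near_orbit_to_real_axis[OF c(2,3)] by blast
qed

end
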